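(* Let $\Lambda$ be a $k$-graph with no sinks such that $\Lambda^0$ is finite. Then for every $v\in\Lambda^0$ there exist $w\in\Lambda^0$ and $\alpha\in w\Lambda w$ such that $d(\alpha)>0$ and $w\Lambda v\ne\emptyset$.
   Context: A $k$-graph is a countable category $\Lambda$ with a functor $d:\Lambda\to\mathbb{N}^k$ with unique factorisation (for each $\lambda$ and $d(\lambda)=m+n$ there are unique $\mu,\nu$ with $d(\mu)=m$, $d(\nu)=n$, $\lambda=\mu\nu$); $\Lambda^n=d^{-1}(n)$, $\Lambda^0$ = vertices, $uXv=\{\lambda\in X:r(\lambda)=u,s(\lambda)=v\}$. No sinks: $\Lambda^nv\ne\emptyset$ for all $v\in\Lambda^0$ and nonzero $n\in\mathbb{N}^k$. For $m\in\mathbb{N}^k$, $m>0$ means $m_i>0$ for all $i$. *)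

theory Defs
  imports "HOL-Library.Countable_Set"
begin

text \<open>Elements of N^k are
 represented as functions nat => nat vanishing outside {..<k}.\<close>

definition deg_vec :: "nat \<Rightarrow> (nat \<Rightarrow> nat) \<Rightarrow> bool" where
  "deg_vec k n \<longleftrightarrow> (\<forall>i\<ge>k. n i = 0)"

definition is_kgraph ::
  "nat \<Rightarrow> 'v set \<Rightarrow> 'a set \<Rightarrow> ('a \<Rightarrow> 'v) \<Rightarrow> ('a \<Rightarrow> 'v) \<Rightarrow>
   ('a \<Rightarrow> 'a \<Rightarrow> 'a) \<Rightarrow> ('v \<Rightarrow> 'a) \<Rightarrow> ('a \<Rightarrow> nat \<Rightarrow> nat) \<Rightarrow> bool" where
  "is_kgraph k V Mor r s cmp ident d \<longleftrightarrow>
     countable Mor \<and>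
     (\<forall>l\<in>Mor. r l \<in> V \<and> s l \<in> V) \<and>
     (\<forall>v\<in>V. ident v \<in> Mor \<and> r (ident v) = v \<and> s (ident v) = v) \<and>
     (\<forall>l\<in>Mor. \<forall>m\<in>Mor. s l = r m \<longrightarrow>
         cmp l m \<in> Mor \<and> r (cmp l m) = r l \<and> s (cmp l m) = s m) \<and>
     (\<forall>l\<in>Mor. \<forall>m\<in>Mor. \<forall>n\<in>Mor. s l = r m \<longrightarrow> s m = r n \<longrightarrow>
         cmp (cmp l m) n = cmp l (cmp m n)) \<and>
     (\<forall>l\<in>Mor. cmp (ident (r l)) l = l \<and> cmp l (ident (s l)) = l) \<and>
     (\<forall>l\<in>Mor. deg_vec k (d l)) \<and>
     (\<forall>v\<in>V. d (ident v) = (\<lambda>i. 0)) \<and>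
     (\<forall>l\<in>Mor. \<forall>m\<in>Mor. s l = r m \<longrightarrow> d (cmp l m) = (\<lambda>i. d l i + d m i)) \<and>
     (\<forall>l\<in>Mor. \<forall>m n. deg_vec k m \<longrightarrow> deg_vec k n \<longrightarrow> d l = (\<lambda>i. m i + n i) \<longrightarrow>
         (\<exists>!p. fst p \<in> Mor \<and> snd p \<in> Mor \<and> s (fst p) = r (snd p) \<and>
               d (fst p) = m \<and> d (snd p) = n \<and> l = cmp (fst p) (snd p)))"

definition no_sinks ::
  "nat \<Rightarrow> 'v set \<Rightarrow> 'a set \<Rightarrow> ('a \<Rightarrow> 'v) \<Rightarrow> ('a \<Rightarrow> nat \<Rightarrow> nat) \<Rightarrow> bool" where
  "no_sinks k V Mor s d \<longleftrightarrow>
     (\<forall>v\<in>V. \<forall>n. deg_vec k n \<longrightarrow> n \<noteq> (\<lambda>i. 0) \<longrightarrow> (\<exists>l\<in>Mor. d l = n \<and> s l = v))"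

end

theory Submission
  imports Defs
begin

text \<open>Pick at every vertex \<open>x\<close> a morphism \<open>g x\<close> with source \<open>x\<close> and degree \<open>(1,\<dots>,1)\<close>, which
  exists since there are no sinks. Iterating \<open>x \<mapsto> r (g x)\<close> from \<open>v\<close> and composing the chosen
  morphisms gives paths of degree \<open>t\<cdot>(1,\<dots>,1)\<close> out of \<open>v\<close>. As \<open>\<Lambda>\<^sup>0\<close> is finite the iteration
  revisits some vertex \<open>w\<close>, and the path between the two visits is the required cycle at \<open>w\<close>.\<close>

lemma kgraph_range_source:
  assumes "is_kgraph k V Mor r s cmp ident d" and "l \<in> Mor"
  shows "r l \<in> V" "s l \<in> V"
  using assms unfolding is_kgraph_def by auto

lemma kgraph_ident:
  assumes "is_kgraph k V Mor r s cmp ident d" and "v \<in> V"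
  shows "ident v \<in> Mor" "r (ident v) = v" "s (ident v) = v" "d (ident v) = (\<lambda>i. 0)"
  using assms unfolding is_kgraph_def by auto

lemma kgraph_cmp:
  assumes "is_kgraph k V Mor r s cmp ident d" and "l \<in> Mor" "m \<in> Mor" "s l = r m"
  shows "cmp l m \<in> Mor" "r (cmp l m) = r l" "s (cmp l m) = s m"
    "d (cmp l m) = (\<lambda>i. d l i + d m i)"
  using assms unfolding is_kgraph_def by auto

definition unit_deg :: "nat \<Rightarrow> nat \<Rightarrow> nat" where
  "unit_deg k = (\<lambda>i. if i < k then 1 else 0)"

text \<open>For \<open>k = 0\<close> the no-sinks condition is vacuous and the identities serve instead.\<close>

lemma kgraph_unit_deg_edge:
  assumes "is_kgraph k V Mor r s cmp ident d" and "no_sinks k V Mor s d" and "x \<in> V"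
  shows "\<exists>l\<in>Mor. s l = x \<and> d l = unit_deg k"
proof (cases "k = 0")
  case True
  then show ?thesis
    using kgraph_ident[OF assms(1,3)] by (intro bexI[of _ "ident x"]) (auto simp: unit_deg_def)
next
  case False
  have "deg_vec k (unit_deg k)" by (simp add: deg_vec_def unit_deg_def)
  moreover have "unit_deg k \<noteq> (\<lambda>i. 0)"
    using False by (metis less_numeral_extra(3) neq0_conv one_neq_zero unit_deg_def)
  ultimately show ?thesis using assms(2,3) unfolding no_sinks_def by blast
qed

lemma kgraph_iterated_path:
  assumes kg: "is_kgraph k V Mor r s cmp ident d"
    and g: "\<And>x. x \<in> V \<Longrightarrow> g x \<in> Mor \<and> s (g x) = x \<and> d (g x) = n"
    and "x \<in> V"
  shows "\<exists>p\<in>Mor. s p = x \<and> r p = ((r \<circ> g) ^^ t) x \<and> d p = (\<lambda>i. t * n i)"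
proof (induction t)
  case 0
  show ?case using kgraph_ident[OF kg \<open>x \<in> V\<close>] by auto
next
  case (Suc t)
  then obtain p where p: "p \<in> Mor" "s p = x" "r p = ((r \<circ> g) ^^ t) x" "d p = (\<lambda>i. t * n i)"
    by blast
  have "r p \<in> V" using kgraph_range_source(1)[OF kg p(1)] .
  with g have e: "g (r p) \<in> Mor" "s (g (r p)) = r p" "d (g (r p)) = n" by auto
  show ?case
    using kgraph_cmp[OF kg e(1) p(1) e(2)] p e(3)
    by (intro bexI[of _ "cmp (g (r p)) p"]) (auto simp: comp_def)
qed

lemma funpow_repeats:
  assumes "finite A" "h ` A \<subseteq> A" "x \<in> A"
  obtains a b where "a < b" "(h ^^ a) x = (h ^^ b) x"
proof -
  have "(h ^^ j) x \<in> A" for j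
    using assms(2,3) by (induction j) auto
  then have "finite (range (\<lambda>j. (h ^^ j) x))"
    using assms(1) by (meson finite_subset image_subsetI)
  then have "\<not> inj (\<lambda>j. (h ^^ j) x)"
    using finite_imageD by blast
  then obtain a b where "a \<noteq> b" "(h ^^ a) x = (h ^^ b) x"
    unfolding inj_def by blast
  then show thesis
    using that by (metis linorder_neqE_nat)
qed

theorem lemma2p9:
  fixes k :: nat and V :: "'v set" and Mor :: "'a set"
    and r s :: "'a \<Rightarrow> 'v" and cmp :: "'a \<Rightarrow> 'a \<Rightarrow> 'a"
    and ident :: "'v \<Rightarrow> 'a" and d :: "'a \<Rightarrow> nat \<Rightarrow> nat"
  assumes "is_kgraph k V Mor r s cmp ident d"
    and "no_sinks k V Mor s d"
    and "finite V"
    and "v \<in> V"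
  shows "\<exists>w\<in>V. \<exists>\<alpha>\<in>Mor. r \<alpha> = w \<and> s \<alpha> = w \<and> (\<forall>i<k. d \<alpha> i > 0) \<and>
           (\<exists>\<mu>\<in>Mor. r \<mu> = w \<and> s \<mu> = v)"
proof -
  obtain g where g: "\<And>x. x \<in> V \<Longrightarrow> g x \<in> Mor \<and> s (g x) = x \<and> d (g x) = unit_deg k"
    using kgraph_unit_deg_edge[OF assms(1,2)] by metis
  let ?h = "r \<circ> g"
  have h_V: "?h ` V \<subseteq> V"
    using g kgraph_range_source(1)[OF assms(1)] by auto
  obtain a b where "a < b" and cycle: "(?h ^^ a) v = (?h ^^ b) v"
    using funpow_repeats[OF assms(3) h_V assms(4)] .
  define w where "w = (?h ^^ a) v"
  have "w \<in> V"
    unfolding w_def using h_V assms(4) by (induction a) auto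
  obtain \<mu> where "\<mu> \<in> Mor" "s \<mu> = v" "r \<mu> = w"
    using kgraph_iterated_path[OF assms(1) g assms(4), of a] unfolding w_def by blast
  obtain \<alpha> where "\<alpha> \<in> Mor" "s \<alpha> = w" and r_\<alpha>: "r \<alpha> = (?h ^^ (b - a)) w"
    and d_\<alpha>: "d \<alpha> = (\<lambda>i. (b - a) * unit_deg k i)"
    using kgraph_iterated_path[OF assms(1) g \<open>w \<in> V\<close>] by blast
  have "(?h ^^ (b - a)) w = (?h ^^ (b - a + a)) v"
    unfolding w_def funpow_add by simp
  with cycle \<open>a < b\<close> have "r \<alpha> = w"
    by (simp add: r_\<alpha> w_def)
  moreover have "\<forall>i<k. d \<alpha> i > 0"
    using \<open>a < b\<close> by (simp add: d_\<alpha> unit_deg_def)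
  ultimately show ?thesis
    using \<open>w \<in> V\<close> \<open>\<alpha> \<in> Mor\<close> \<open>s \<alpha> = w\<close> \<open>\<mu> \<in> Mor\<close> \<open>s \<mu> = v\<close> \<open>r \<mu> = w\<close> by blast
qed

end
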